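(* Let $\mathbf{A}\in\mathbb{Z}^{r\times n}$ be a fixed matrix, let $s\ge1$, and let $\mathbf{x}\in\{-1,0,1\}^n$ be random with independent coordinates, where for each $i$, $x_i=0$ with probability $1-\frac{2c}{s}$ and $x_i=1$ or $x_i=-1$ each with probability $\frac{c}{s}$, for a sufficiently small absolute constant $c>0$. Suppose there exist $\mathbf{y}\in\mathbb{R}^r$ and $j\in[n]$ such that $|\mathrm{Frac}((\mathbf{y}^\top\mathbf{A})_j)|^2\ge\frac{1}{s}\|\mathrm{Frac}(\mathbf{y}^\top\mathbf{A})\|_2^2$. Then the mutual information satisfies $I(\mathbf{A}\mathbf{x};x_j)=\Omega\left(\frac{1}{s}\right)$.
   Context: For $x\in\mathbb{R}$, $\mathrm{Frac}(x)=x-\mathrm{int}(x)\in(-\tfrac12,\tfrac12]$, where $\mathrm{int}(x)$ is the integer closest to $x$; for a vector, $\mathrm{Frac}$ is applied coordinatewise. $I(\cdot;\cdot)$ denotes Shannon mutual information. *)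

theory Defs
  imports "HOL-Probability.Probability"
begin

text \<open>Nearest integer with ties rounded down, so that Frac x = x - nint x lies in (-1/2, 1/2].\<close>
definition nint :: "real \<Rightarrow> int" where
  "nint x = \<lceil>x - 1/2\<rceil>"

definition Frac :: "real \<Rightarrow> real" where
  "Frac x = x - real_of_int (nint x)"

text \<open>Law of one coordinate: 0 with prob. 1 - 2c/s, and +1, -1 with prob. c/s each
  (valid whenever 0 <= 2c/s <= 1).\<close>
definition coord_pmf :: "real \<Rightarrow> real \<Rightarrow> int pmf" where
  "coord_pmf c s = bind_pmf (bernoulli_pmf (2 * c / s))
     (\<lambda>b. if b then map_pmf (\<lambda>u. if u then 1 else -1) (bernoulli_pmf (1/2)) else return_pmf 0)"

text \<open>Random vector x in {-1,0,1}^n with independent coordinates (indices 0..n-1; 0 elsewhere).\<close>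
definition x_pmf :: "nat \<Rightarrow> real \<Rightarrow> real \<Rightarrow> (nat \<Rightarrow> int) pmf" where
  "x_pmf n c s = Pi_pmf {..<n} 0 (\<lambda>_. coord_pmf c s)"

definition matvec :: "nat \<Rightarrow> nat \<Rightarrow> (nat \<Rightarrow> nat \<Rightarrow> int) \<Rightarrow> (nat \<Rightarrow> int) \<Rightarrow> int list" where
  "matvec r n A x = map (\<lambda>i. \<Sum>k<n. A i k * x k) [0..<r]"

definition rowcomb :: "nat \<Rightarrow> (nat \<Rightarrow> nat \<Rightarrow> int) \<Rightarrow> (nat \<Rightarrow> real) \<Rightarrow> nat \<Rightarrow> real" where
  "rowcomb r A y k = (\<Sum>i<r. y i * real_of_int (A i k))"

end

theory Submission
  imports Defs
begin

text \<open>Write \<open>\<theta>\<^sub>k = Frac ((y\<^sup>T A)\<^sub>k)\<close>. Modulo 1, the statistic \<open>y\<^sup>T A x\<close> equals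
  \<open>\<theta>\<^sub>j x\<^sub>j + W\<close> with \<open>W = \<Sum>\<^sub>k\<^sub>\<noteq>\<^sub>j \<theta>\<^sub>k x\<^sub>k\<close> independent of \<open>x\<^sub>j\<close>. Since \<open>W\<close> has mean 0 and
  second moment \<open>(2c/s) \<Sum> \<theta>\<^sub>k\<^sup>2 \<le> 2c \<theta>\<^sub>j\<^sup>2\<close>, Chebyshev gives \<open>|W| < |\<theta>\<^sub>j|/2\<close> except with
  probability \<open>8c\<close>. So the event that \<open>y\<^sup>T A x\<close> lies within \<open>|\<theta>\<^sub>j|/2\<close> of \<open>\<theta>\<^sub>j\<close> modulo 1 has
  probability at most \<open>2c/s + 8c\<close>, but probability at least \<open>1 - 8c\<close> given \<open>x\<^sub>j = 1\<close>. Such a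
  correlation forces mutual information: from \<open>p ln (p/q) \<ge> max (p - q) (3p/2 - 2q)\<close> one gets
  \<open>I(X;Y) \<ge> P(X \<in> E, Y \<in> B)/2 - P(X \<in> E) P(Y \<in> B)\<close>.\<close>

lemma ln_ratio_ge_diff:
  fixes p q :: real
  assumes "0 < p" "0 < q"
  shows "p - q \<le> p * ln (p / q)"
proof -
  have "ln (q / p) \<le> q / p - 1"
    using assms by (intro ln_le_minus_one) auto
  moreover have "ln (q / p) = - ln (p / q)"
    using assms by (simp add: ln_div)
  ultimately have "p * (1 - q / p) \<le> p * ln (p / q)"
    using assms by (intro mult_left_mono) auto
  moreover have "p * (1 - q / p) = p - q"
    using assms by (simp add: field_simps)
  ultimately show ?thesis
    by simp
qed

lemma ln_ratio_ge_three_halves: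
  fixes p q :: real
  assumes "0 < p" "0 < q"
  shows "3/2 * p - 2 * q \<le> p * ln (p / q)"
proof -
  have "1/2 \<le> ln (2::real)"
    using ln_ratio_ge_diff[of 2 1] by simp
  moreover have "ln (2 * q / p) \<le> 2 * q / p - 1"
    using assms by (intro ln_le_minus_one) auto
  moreover have "ln (p / q) = ln 2 - ln (2 * q / p)"
    using assms by (simp add: ln_div ln_mult)
  ultimately have "p * (3/2 - 2 * q / p) \<le> p * ln (p / q)"
    using assms by (intro mult_left_mono) auto
  moreover have "p * (3/2 - 2 * q / p) = 3/2 * p - 2 * q"
    using assms by (simp add: field_simps)
  ultimately show ?thesis
    by simp
qed

lemma sum_mult_ln_ratio_ge:
  fixes w q :: "'a \<Rightarrow> real"
  assumes "finite F" "G \<subseteq> F"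
    and "\<And>z. z \<in> F \<Longrightarrow> 0 < w z" "\<And>z. z \<in> F \<Longrightarrow> 0 < q z"
    and "sum w F = 1" "sum q F \<le> 1"
  shows "sum w G / 2 - sum q G \<le> (\<Sum>z\<in>F. w z * ln (w z / q z))"
proof -
  have "(\<Sum>z\<in>G. 3/2 * w z - 2 * q z) \<le> (\<Sum>z\<in>G. w z * ln (w z / q z))"
    using assms(2-4) by (intro sum_mono ln_ratio_ge_three_halves) auto
  moreover have "(\<Sum>z\<in>F - G. w z - q z) \<le> (\<Sum>z\<in>F - G. w z * ln (w z / q z))"
    using assms(3,4) by (intro sum_mono ln_ratio_ge_diff) auto
  moreover have "(\<Sum>z\<in>G. 3/2 * w z - 2 * q z) = 3/2 * sum w G - 2 * sum q G"
    by (simp add: sum_subtractf sum_distrib_left)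
  moreover have "(\<Sum>z\<in>F - G. w z - q z) = sum w (F - G) - sum q (F - G)"
    by (simp add: sum_subtractf)
  ultimately show ?thesis
    using assms(1,2,5,6) sum.subset_diff[of G F w] sum.subset_diff[of G F q]
      sum.subset_diff[of G F "\<lambda>z. w z * ln (w z / q z)"] by linarith
qed

lemma distributed_pmf_count_space:
  fixes M :: "'a pmf" and Z :: "'a \<Rightarrow> 'b::countable"
  shows "distributed (measure_pmf M) (count_space UNIV) Z (\<lambda>x. ennreal (pmf (map_pmf Z M) x))"
proof -
  have "distr (measure_pmf M) (count_space UNIV) Z = measure_pmf (map_pmf Z M)"
    by (simp add: map_pmf_rep_eq)
  also have "\<dots> = density (count_space UNIV) (\<lambda>x. ennreal (pmf (map_pmf Z M) x))"
    by (rule measure_pmf_eq_density)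
  finally show ?thesis
    unfolding distributed_def by auto
qed

lemma mutual_information_pmf_finite:
  fixes M :: "'a pmf" and X :: "'a \<Rightarrow> 'b::countable" and Y :: "'a \<Rightarrow> 'c::countable"
  defines "PXY \<equiv> map_pmf (\<lambda>x. (X x, Y x)) M"
  assumes fin: "finite (set_pmf M)" and b: "1 < b"
  shows "prob_space.mutual_information (measure_pmf M) b (count_space UNIV) (count_space UNIV) X Y =
    (\<Sum>z\<in>set_pmf PXY.
       pmf PXY z * log b (pmf PXY z / (pmf (map_pmf X M) (fst z) * pmf (map_pmf Y M) (snd z))))"
    (is "_ = sum ?f _")
proof -
  interpret information_space "measure_pmf M" b
    by standard (rule b)
  have pair_count_space: "(count_space UNIV \<Otimes>\<^sub>M count_space UNIV :: ('b \<times> 'c) measure) = count_space UNIV"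
    using pair_measure_countable[of "UNIV :: 'b set" "UNIV :: 'c set"] by simp
  have finPXY: "finite (set_pmf PXY)"
    using fin by (simp add: PXY_def)
  have "prob_space.mutual_information (measure_pmf M) b (count_space UNIV) (count_space UNIV) X Y
      = integral\<^sup>L (count_space UNIV) ?f"
    using mutual_information_distr[OF sigma_finite_measure_count_space sigma_finite_measure_count_space
        distributed_pmf_count_space _ distributed_pmf_count_space _
        distributed_pmf_count_space[of M "\<lambda>x. (X x, Y x)", folded pair_count_space]]
    by (simp add: PXY_def pair_count_space)
  also have "\<dots> = sum ?f {z \<in> UNIV. ?f z \<noteq> 0}"
  proof (rule lebesgue_integral_count_space_finite_support)
    have "{z \<in> UNIV. ?f z \<noteq> 0} \<subseteq> set_pmf PXY"
      by (auto simp: set_pmf_iff)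
    then show "finite {z \<in> UNIV. ?f z \<noteq> 0}"
      using finPXY finite_subset by blast
  qed
  also have "\<dots> = sum ?f (set_pmf PXY)"
    using finPXY by (intro sum.mono_neutral_left) (auto simp: set_pmf_iff)
  finally show ?thesis .
qed

lemma mutual_information_pmf_ge:
  fixes M :: "'a pmf" and X :: "'a \<Rightarrow> 'b::countable" and Y :: "'a \<Rightarrow> 'c::countable"
  assumes fin: "finite (set_pmf M)"
  shows "measure M {x. X x \<in> E \<and> Y x \<in> B} / 2 - measure M {x. X x \<in> E} * measure M {x. Y x \<in> B}
     \<le> prob_space.mutual_information (measure_pmf M) 2 (count_space UNIV) (count_space UNIV) X Y"
proof -
  define PXY where "PXY = map_pmf (\<lambda>x. (X x, Y x)) M"
  define PX where "PX = map_pmf X M"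
  define PY where "PY = map_pmf Y M"
  define F where "F = set_pmf PXY"
  define G where "G = F \<inter> E \<times> B"
  define q where "q z = pmf PX (fst z) * pmf PY (snd z)" for z
  define S where "S = (\<Sum>z\<in>F. pmf PXY z * ln (pmf PXY z / q z))"
  have finF: "finite F" and finX: "finite (set_pmf PX)" and finY: "finite (set_pmf PY)"
    using fin by (simp_all add: F_def PXY_def PX_def PY_def)
  have FXY: "F \<subseteq> set_pmf PX \<times> set_pmf PY"
    by (auto simp: F_def PXY_def PX_def PY_def)
  have sum_q_Times: "sum q (U \<times> V) = measure PX U * measure PY V"
    if "U \<subseteq> set_pmf PX" "V \<subseteq> set_pmf PY" for U V
    using finite_subset[OF that(1) finX] finite_subset[OF that(2) finY]
    by (simp add: q_def sum_product sum.cartesian_product case_prod_beta measure_measure_pmf_finite)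
  have "sum q F \<le> sum q (set_pmf PX \<times> set_pmf PY)"
    using finX finY FXY by (intro sum_mono2) (auto simp: q_def)
  also have "\<dots> = 1"
    using measure_Int_set_pmf[of PX UNIV] measure_Int_set_pmf[of PY UNIV] by (simp add: sum_q_Times)
  finally have "sum q F \<le> 1" .
  moreover have "sum (pmf PXY) F = 1"
    using finF by (simp add: F_def sum_pmf_eq_1)
  moreover have "0 < q z" if "z \<in> F" for z
    using that FXY by (auto simp: q_def intro!: mult_pos_pos pmf_positive)
  ultimately have S_ge: "sum (pmf PXY) H / 2 - sum q H \<le> S" if "H \<subseteq> F" for H
    using finF that unfolding S_def by (intro sum_mult_ln_ratio_ge) (auto simp: F_def pmf_positive)
  have "sum (pmf PXY) G = measure PXY (E \<times> B \<inter> set_pmf PXY)"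
    using finF by (simp add: G_def F_def measure_measure_pmf_finite Int_commute)
  also have "\<dots> = measure M {x. X x \<in> E \<and> Y x \<in> B}"
    unfolding measure_Int_set_pmf by (simp add: PXY_def vimage_def)
  finally have sum_pmf_G: "sum (pmf PXY) G = measure M {x. X x \<in> E \<and> Y x \<in> B}" .
  have "sum q G \<le> sum q ((set_pmf PX \<inter> E) \<times> (set_pmf PY \<inter> B))"
    using finX finY FXY by (intro sum_mono2) (auto simp: G_def q_def)
  also have "\<dots> = measure PX (E \<inter> set_pmf PX) * measure PY (B \<inter> set_pmf PY)"
    by (subst sum_q_Times) (auto simp: Int_commute)
  also have "\<dots> = measure M {x. X x \<in> E} * measure M {x. Y x \<in> B}"
    unfolding measure_Int_set_pmf by (simp add: PX_def PY_def vimage_def)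
  finally have "sum q G \<le> measure M {x. X x \<in> E} * measure M {x. Y x \<in> B}" .
  then have "measure M {x. X x \<in> E \<and> Y x \<in> B} / 2 - measure M {x. X x \<in> E} * measure M {x. Y x \<in> B}
      \<le> S"
    using S_ge[of G] sum_pmf_G by (auto simp: G_def)
  moreover have "S \<le> S / ln 2"
    \<comment> \<open>\<open>H = {}\<close> in \<open>S_ge\<close> is Gibbs' inequality \<open>0 \<le> S\<close>, and \<open>ln 2 < 1\<close>.\<close>
    using S_ge[of "{}"] ln_2_less_1 by (simp add: le_divide_eq mult_left_le)
  moreover have "prob_space.mutual_information (measure_pmf M) 2 (count_space UNIV) (count_space UNIV) X Y
      = S / ln 2"
    by (simp add: mutual_information_pmf_finite[OF fin] log_def sum_divide_distrib S_def F_def q_def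
        PXY_def PX_def PY_def)
  ultimately show ?thesis
    by linarith
qed

lemma measure_pair_pmf_Times:
  "measure (pair_pmf M N) (A \<times> B) = measure M A * measure N B"
proof -
  have "measure (pair_pmf M N) (A \<times> B) = measure (pair_pmf M N) ((A \<inter> set_pmf M) \<times> (B \<inter> set_pmf N))"
    by (metis measure_Int_set_pmf set_pair_pmf Times_Int_Times)
  also have "\<dots> = measure M (A \<inter> set_pmf M) * measure N (B \<inter> set_pmf N)"
    by (intro measure_pmf_prob_product countable_Int2 countable_set_pmf)
  finally show ?thesis
    by (simp add: measure_Int_set_pmf)
qed

lemma finite_set_Pi_pmf:
  assumes "finite A" "\<And>i. i \<in> A \<Longrightarrow> finite (set_pmf (p i))"
  shows "finite (set_pmf (Pi_pmf A d p))"
  using assms by (auto simp: set_Pi_pmf intro!: finite_PiE_dflt)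

lemma expectation_pair_pmf_mult:
  fixes g :: "'a \<Rightarrow> real" and h :: "'b \<Rightarrow> real"
  assumes "finite (set_pmf M)" "finite (set_pmf N)"
  shows "measure_pmf.expectation (pair_pmf M N) (\<lambda>z. g (fst z) * h (snd z)) =
         measure_pmf.expectation M g * measure_pmf.expectation N h"
proof -
  have pmf_pair': "pmf (pair_pmf M N) z = pmf M (fst z) * pmf N (snd z)" for z
    by (cases z) (simp add: pmf_pair)
  have "measure_pmf.expectation (pair_pmf M N) (\<lambda>z. g (fst z) * h (snd z)) =
     (\<Sum>z\<in>set_pmf M \<times> set_pmf N. g (fst z) * h (snd z) * pmf (pair_pmf M N) z)"
    using assms by (intro integral_measure_pmf_real) auto
  also have "\<dots> = (\<Sum>a\<in>set_pmf M. g a * pmf M a) * (\<Sum>b\<in>set_pmf N. h b * pmf N b)"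
    by (simp add: sum_product sum.cartesian_product case_prod_beta pmf_pair' algebra_simps)
  also have "\<dots> = measure_pmf.expectation M g * measure_pmf.expectation N h"
    using assms by (simp add: integral_measure_pmf_real)
  finally show ?thesis .
qed

lemma expectation_Pi_pmf_linear_form_square:
  fixes Q :: "int pmf" and \<theta> :: "'i \<Rightarrow> real"
  assumes "finite A" and finQ: "finite (set_pmf Q)"
    and mean: "measure_pmf.expectation Q real_of_int = 0"
    and second_moment: "measure_pmf.expectation Q (\<lambda>b. (real_of_int b)\<^sup>2) = v"
  shows "measure_pmf.expectation (Pi_pmf A 0 (\<lambda>_. Q)) (\<lambda>f. (\<Sum>k\<in>A. \<theta> k * real_of_int (f k))\<^sup>2)
     = v * (\<Sum>k\<in>A. (\<theta> k)\<^sup>2)"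
  using \<open>finite A\<close>
proof (induction A rule: finite_induct)
  case empty
  then show ?case by simp
next
  case (insert a A)
  define P where "P = Pi_pmf A 0 (\<lambda>_. Q)"
  define W where "W f = (\<Sum>k\<in>A. \<theta> k * real_of_int (f k))" for f :: "'i \<Rightarrow> int"
  have finP: "finite (set_pmf P)"
    using insert.hyps(1) finQ by (simp add: P_def finite_set_Pi_pmf)
  have sum_upd: "(\<Sum>k\<in>insert a A. \<theta> k * real_of_int ((f(a := b)) k)) = \<theta> a * b + W f" for f b
    using insert.hyps by (simp add: W_def) (intro sum.cong; auto)
  have "measure_pmf.expectation (Pi_pmf (insert a A) 0 (\<lambda>_. Q)) (\<lambda>f. (\<Sum>k\<in>insert a A. \<theta> k * real_of_int (f k))\<^sup>2)
      = measure_pmf.expectation (pair_pmf Q P) (\<lambda>z. (\<theta> a * real_of_int (fst z) + W (snd z))\<^sup>2)"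
    by (simp only: Pi_pmf_insert[OF insert.hyps] integral_map_pmf case_prod_beta sum_upd P_def)
  also have "\<dots> = measure_pmf.expectation (pair_pmf Q P) (\<lambda>z. (\<theta> a)\<^sup>2 * (real_of_int (fst z))\<^sup>2
      + 2 * \<theta> a * (real_of_int (fst z) * W (snd z)) + (W (snd z))\<^sup>2)"
    by (simp add: power2_sum power_mult_distrib algebra_simps)
  also have "\<dots> = (\<theta> a)\<^sup>2 * measure_pmf.expectation (pair_pmf Q P) (\<lambda>z. (real_of_int (fst z))\<^sup>2)
      + 2 * \<theta> a * measure_pmf.expectation (pair_pmf Q P) (\<lambda>z. real_of_int (fst z) * W (snd z))
      + measure_pmf.expectation (pair_pmf Q P) (\<lambda>z. (W (snd z))\<^sup>2)"
    using finP finQ by (simp add: integrable_measure_pmf_finite)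
  also have "\<dots> = v * (\<Sum>k\<in>insert a A. (\<theta> k)\<^sup>2)"
    using insert.IH insert.hyps mean second_moment expectation_pair_pmf_mult[OF finQ finP, of real_of_int W]
      expectation_pair_pmf_fst[of Q P "\<lambda>b. (real_of_int b)\<^sup>2"] expectation_pair_pmf_snd[of Q P "\<lambda>f. (W f)\<^sup>2"]
    by (simp add: P_def W_def algebra_simps)
  finally show ?case .
qed

lemma measure_pmf_abs_ge_le:
  fixes M :: "'a pmf" and W :: "'a \<Rightarrow> real"
  assumes "finite (set_pmf M)" "0 < t"
  shows "measure M {f. t \<le> \<bar>W f\<bar>} \<le> measure_pmf.expectation M (\<lambda>f. (W f)\<^sup>2) / t\<^sup>2"
proof -
  have "measure M {f. t \<le> \<bar>W f\<bar>} = measure M {f \<in> space M. t\<^sup>2 \<le> (W f)\<^sup>2}"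
    using assms(2) abs_le_square_iff[of t "W _"] by auto
  also have "\<dots> \<le> measure_pmf.expectation M (\<lambda>f. (W f)\<^sup>2) / t\<^sup>2"
    using assms by (intro integral_Markov_inequality_measure[where A = UNIV])
      (auto simp: integrable_measure_pmf_finite)
  finally show ?thesis .
qed

lemma set_pmf_coord_pmf: "set_pmf (coord_pmf c s) \<subseteq> {-1, 0, 1}"
  unfolding coord_pmf_def by (auto split: if_splits)

lemma pmf_coord_pmf:
  assumes "0 \<le> 2 * c / s" "2 * c / s \<le> 1"
  shows "pmf (coord_pmf c s) b = (if b = 1 \<or> b = -1 then c / s else if b = 0 then 1 - 2 * c / s else 0)"
proof -
  have "pmf (map_pmf (\<lambda>u. if u then 1 else -1) (bernoulli_pmf (1/2))) b
      = measure (bernoulli_pmf (1/2)) ((\<lambda>u. if u then 1 else -1) -` {b})"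
    by (rule pmf_map)
  also have "(\<lambda>u. if u then 1 else -1) -` {b} = (if b = 1 then {True} else if b = -1 then {False} else {})"
    by (auto split: if_splits)
  finally show ?thesis
    using assms by (simp add: coord_pmf_def pmf_bind measure_pmf_single)
qed

lemma expectation_coord_pmf:
  fixes g :: "int \<Rightarrow> real"
  assumes "0 \<le> 2 * c / s" "2 * c / s \<le> 1"
  shows "measure_pmf.expectation (coord_pmf c s) g = c / s * (g 1 + g (-1)) + (1 - 2 * c / s) * g 0"
proof -
  have "measure_pmf.expectation (coord_pmf c s) g = (\<Sum>b\<in>{-1, 0, 1}. g b * pmf (coord_pmf c s) b)"
    using set_pmf_coord_pmf by (intro integral_measure_pmf_real) auto
  then show ?thesis
    using assms by (simp add: pmf_coord_pmf algebra_simps)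
qed

lemma finite_set_pmf_coord_pmf: "finite (set_pmf (coord_pmf c s))"
  using set_pmf_coord_pmf by (rule finite_subset) simp

lemma measure_coord_pmf:
  assumes "0 \<le> 2 * c / s" "2 * c / s \<le> 1"
  shows "measure (coord_pmf c s) S
    = c / s * (indicator S 1 + indicator S (-1)) + (1 - 2 * c / s) * indicator S 0"
  using expectation_coord_pmf[OF assms, of "indicator S"] by simp

lemma measure_Pi_coord_pmf_linear_form_ge:
  fixes \<theta> :: "'i \<Rightarrow> real"
  assumes "finite I" "0 \<le> 2 * c / s" "2 * c / s \<le> 1" "0 < t"
  shows "measure (Pi_pmf I 0 (\<lambda>_. coord_pmf c s)) {f. t \<le> \<bar>\<Sum>k\<in>I. \<theta> k * real_of_int (f k)\<bar>}
    \<le> 2 * c / s * (\<Sum>k\<in>I. (\<theta> k)\<^sup>2) / t\<^sup>2"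
    (is "measure (measure_pmf ?P) {f. t \<le> \<bar>?W f\<bar>} \<le> _")
proof -
  have "finite (set_pmf ?P)"
    using assms(1) by (intro finite_set_Pi_pmf finite_set_pmf_coord_pmf)
  then have "measure ?P {f. t \<le> \<bar>?W f\<bar>} \<le> measure_pmf.expectation ?P (\<lambda>f. (?W f)\<^sup>2) / t\<^sup>2"
    using assms(4) by (rule measure_pmf_abs_ge_le)
  also have "measure_pmf.expectation ?P (\<lambda>f. (?W f)\<^sup>2) = 2 * c / s * (\<Sum>k\<in>I. (\<theta> k)\<^sup>2)"
    using assms by (intro expectation_Pi_pmf_linear_form_square finite_set_pmf_coord_pmf)
      (simp_all add: expectation_coord_pmf)
  finally show ?thesis .
qed

lemma abs_Frac_le: "\<bar>Frac x\<bar> \<le> 1/2"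
  using ceiling_correct[of "x - 1/2"] unfolding Frac_def nint_def by linarith

lemma sum_mult_matvec:
  "(\<Sum>i<r. y i * real_of_int (matvec r n A x ! i)) = (\<Sum>k<n. rowcomb r A y k * real_of_int (x k))"
proof -
  have "(\<Sum>i<r. y i * real_of_int (matvec r n A x ! i))
      = (\<Sum>i<r. \<Sum>k<n. y i * real_of_int (A i k) * real_of_int (x k))"
    unfolding matvec_def by (intro sum.cong) (auto simp: sum_distrib_left mult.assoc)
  also have "\<dots> = (\<Sum>k<n. \<Sum>i<r. y i * real_of_int (A i k) * real_of_int (x k))"
    by (rule sum.swap)
  also have "\<dots> = (\<Sum>k<n. rowcomb r A y k * real_of_int (x k))"
    unfolding rowcomb_def by (simp add: sum_distrib_right)
  finally show ?thesis .
qed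

definition near_mod1 :: "real \<Rightarrow> real \<Rightarrow> real \<Rightarrow> bool" where
  "near_mod1 t a u \<longleftrightarrow> (\<exists>m::int. \<bar>u - a - of_int m\<bar> < t)"

lemma near_mod1_add_int: "near_mod1 t a (u + of_int N) \<longleftrightarrow> near_mod1 t a u"
proof
  assume "near_mod1 t a (u + of_int N)"
  then obtain m :: int where "\<bar>u + of_int N - a - of_int m\<bar> < t"
    unfolding near_mod1_def by blast
  then have "\<bar>u - a - of_int (m - N)\<bar> < t"
    by (simp add: algebra_simps)
  then show "near_mod1 t a u"
    unfolding near_mod1_def by blast
next
  assume "near_mod1 t a u"
  then obtain m :: int where "\<bar>u - a - of_int m\<bar> < t"
    unfolding near_mod1_def by blast
  then have "\<bar>u + of_int N - a - of_int (m + N)\<bar> < t"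
    by (simp add: algebra_simps)
  then show "near_mod1 t a (u + of_int N)"
    unfolding near_mod1_def by blast
qed

lemma near_mod1_add_small: "\<bar>w\<bar> < t \<Longrightarrow> near_mod1 t a (a + w)"
  unfolding near_mod1_def by (auto intro!: exI[of _ 0])

lemma not_near_mod1_small:
  assumes "\<bar>a\<bar> \<le> 1/2" "\<bar>w\<bar> < \<bar>a\<bar> / 2"
  shows "\<not> near_mod1 (\<bar>a\<bar> / 2) a w"
proof
  assume "near_mod1 (\<bar>a\<bar> / 2) a w"
  then obtain m :: int where m: "\<bar>w - a - of_int m\<bar> < \<bar>a\<bar> / 2"
    unfolding near_mod1_def by blast
  show False
  proof (cases "m = 0")
    case True
    then show False using m assms(2) by linarith
  next
    case False
    then have "1 \<le> \<bar>real_of_int m\<bar>" by linarith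
    then show False using m assms by linarith
  qed
qed

lemma near_mod1_matvec_iff:
  "near_mod1 t a (\<Sum>i<r. y i * real_of_int (matvec r n A x ! i))
    \<longleftrightarrow> near_mod1 t a (\<Sum>k<n. Frac (rowcomb r A y k) * real_of_int (x k))"
proof -
  have "(\<Sum>i<r. y i * real_of_int (matvec r n A x ! i))
      = (\<Sum>k<n. Frac (rowcomb r A y k) * real_of_int (x k))
        + of_int (\<Sum>k<n. nint (rowcomb r A y k) * x k)"
    unfolding sum_mult_matvec Frac_def by (simp add: sum.distrib[symmetric] algebra_simps)
  then show ?thesis
    by (simp only: near_mod1_add_int)
qed

lemma measure_update_pmf_near_mod1_ge:
  fixes Q :: "int pmf" and P :: "('i \<Rightarrow> int) pmf"
  assumes S: "\<And>b f. S (f(j := b)) = a * real_of_int b + W f"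
  shows "measure Q {1} * (1 - measure P {f. t \<le> \<bar>W f\<bar>})
    \<le> measure (map_pmf (\<lambda>(b, f). f(j := b)) (pair_pmf Q P)) {x. near_mod1 t a (S x) \<and> x j = 1}"
proof -
  have "{f. \<bar>W f\<bar> < t} = space (measure_pmf P) - {f. t \<le> \<bar>W f\<bar>}"
    by auto
  then have "measure P {f. \<bar>W f\<bar> < t} = 1 - measure P {f. t \<le> \<bar>W f\<bar>}"
    by (simp only:) (rule measure_pmf.prob_compl, simp)
  then have "measure Q {1} * (1 - measure P {f. t \<le> \<bar>W f\<bar>})
      = measure (pair_pmf Q P) ({1} \<times> {f. \<bar>W f\<bar> < t})"
    by (simp add: measure_pair_pmf_Times)
  also have "\<dots> \<le> measure (pair_pmf Q P) ((\<lambda>(b, f). f(j := b)) -` {x. near_mod1 t a (S x) \<and> x j = 1})"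
    by (intro measure_pmf.finite_measure_mono) (auto simp: S intro: near_mod1_add_small)
  finally show ?thesis
    by simp
qed

lemma measure_update_pmf_near_mod1_le:
  fixes Q :: "int pmf" and P :: "('i \<Rightarrow> int) pmf"
  assumes S: "\<And>b f. S (f(j := b)) = a * real_of_int b + W f" and "\<bar>a\<bar> \<le> 1/2"
  shows "measure (map_pmf (\<lambda>(b, f). f(j := b)) (pair_pmf Q P)) {x. near_mod1 (\<bar>a\<bar> / 2) a (S x)}
    \<le> measure Q {b. b \<noteq> 0} + measure P {f. \<bar>a\<bar> / 2 \<le> \<bar>W f\<bar>}"
proof -
  have "\<bar>a\<bar> / 2 \<le> \<bar>W f\<bar>" if "near_mod1 (\<bar>a\<bar> / 2) a (S (f(j := 0)))" for f
    using that not_near_mod1_small[OF assms(2), of "W f"] by (force simp: S)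
  then have "(\<lambda>(b, f). f(j := b)) -` {x. near_mod1 (\<bar>a\<bar> / 2) a (S x)}
      \<subseteq> {b. b \<noteq> 0} \<times> UNIV \<union> UNIV \<times> {f. \<bar>a\<bar> / 2 \<le> \<bar>W f\<bar>}"
    by auto
  then have "measure (map_pmf (\<lambda>(b, f). f(j := b)) (pair_pmf Q P)) {x. near_mod1 (\<bar>a\<bar> / 2) a (S x)}
      \<le> measure (pair_pmf Q P) ({b. b \<noteq> 0} \<times> UNIV \<union> UNIV \<times> {f. \<bar>a\<bar> / 2 \<le> \<bar>W f\<bar>})"
    by (simp add: measure_pmf.finite_measure_mono)
  also have "\<dots> \<le> measure (pair_pmf Q P) ({b. b \<noteq> 0} \<times> UNIV)
      + measure (pair_pmf Q P) (UNIV \<times> {f. \<bar>a\<bar> / 2 \<le> \<bar>W f\<bar>})"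
    by (rule measure_Un_le) auto
  finally show ?thesis
    by (simp add: measure_pair_pmf_Times)
qed

lemma x_pmf_split:
  assumes "j < n"
  shows "x_pmf n c s = map_pmf (\<lambda>(b, f). f(j := b))
    (pair_pmf (coord_pmf c s) (Pi_pmf ({..<n} - {j}) 0 (\<lambda>_. coord_pmf c s)))"
proof -
  have "Pi_pmf (insert j ({..<n} - {j})) 0 (\<lambda>_. coord_pmf c s) = map_pmf (\<lambda>(b, f). f(j := b))
    (pair_pmf (coord_pmf c s) (Pi_pmf ({..<n} - {j}) 0 (\<lambda>_. coord_pmf c s)))"
    by (rule Pi_pmf_insert) simp_all
  moreover have "insert j ({..<n} - {j}) = {..<n}"
    using assms by auto
  ultimately show ?thesis
    by (simp add: x_pmf_def)
qed

lemma measure_x_pmf_coordinate: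
  assumes "j < n"
  shows "measure (x_pmf n c s) {x. x j \<in> B} = measure (coord_pmf c s) B"
proof -
  have "measure (x_pmf n c s) {x. x j \<in> B} = measure (map_pmf (\<lambda>x. x j) (x_pmf n c s)) B"
    by (simp add: vimage_def)
  also have "map_pmf (\<lambda>x. x j) (x_pmf n c s) = coord_pmf c s"
    using assms by (simp add: x_pmf_def Pi_pmf_component)
  finally show ?thesis .
qed

lemma measure_Pi_coord_pmf_dominated_tail:
  fixes \<theta> :: "'i \<Rightarrow> real"
  assumes "finite I" "j \<in> I" "0 < c" "2 * c \<le> s"
    and nonzero: "\<theta> j \<noteq> 0" and dominant: "(1/s) * (\<Sum>k\<in>I. (\<theta> k)\<^sup>2) \<le> (\<theta> j)\<^sup>2"
  shows "measure (Pi_pmf (I - {j}) 0 (\<lambda>_. coord_pmf c s))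
    {f. \<bar>\<theta> j\<bar> / 2 \<le> \<bar>\<Sum>k\<in>I - {j}. \<theta> k * real_of_int (f k)\<bar>} \<le> 8 * c"
proof -
  have s: "0 < s" "0 \<le> 2 * c / s" "2 * c / s \<le> 1"
    using assms(3,4) by (auto simp: field_simps)
  have "(\<Sum>k\<in>I - {j}. (\<theta> k)\<^sup>2) \<le> (\<Sum>k\<in>I. (\<theta> k)\<^sup>2)"
    using assms(1) by (intro sum_mono2) auto
  also have "\<dots> \<le> s * (\<theta> j)\<^sup>2"
    using dominant s by (simp add: field_simps)
  finally have sum_le: "(\<Sum>k\<in>I - {j}. (\<theta> k)\<^sup>2) \<le> s * (\<theta> j)\<^sup>2" .
  have "measure (Pi_pmf (I - {j}) 0 (\<lambda>_. coord_pmf c s))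
      {f. \<bar>\<theta> j\<bar> / 2 \<le> \<bar>\<Sum>k\<in>I - {j}. \<theta> k * real_of_int (f k)\<bar>}
      \<le> 2 * c / s * (\<Sum>k\<in>I - {j}. (\<theta> k)\<^sup>2) / (\<bar>\<theta> j\<bar> / 2)\<^sup>2"
    using assms(1) s nonzero by (intro measure_Pi_coord_pmf_linear_form_ge) auto
  also have "\<dots> \<le> 2 * c / s * (s * (\<theta> j)\<^sup>2) / (\<bar>\<theta> j\<bar> / 2)\<^sup>2"
    using s sum_le by (intro divide_right_mono mult_left_mono) auto
  also have "\<dots> = 8 * c"
    using s nonzero by (simp add: power2_eq_square field_simps)
  finally show ?thesis .
qed

lemma measure_x_pmf_near_mod1:
  fixes \<theta> :: "nat \<Rightarrow> real" and n j :: nat and c s :: real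
  defines "S \<equiv> \<lambda>x. \<Sum>k<n. \<theta> k * real_of_int (x k)"
    and "tail \<equiv> measure (Pi_pmf ({..<n} - {j}) 0 (\<lambda>_. coord_pmf c s))
      {f. \<bar>\<theta> j\<bar> / 2 \<le> \<bar>\<Sum>k\<in>{..<n} - {j}. \<theta> k * real_of_int (f k)\<bar>}"
  assumes j: "j < n" and "\<bar>\<theta> j\<bar> \<le> 1/2" and p: "0 \<le> 2 * c / s" "2 * c / s \<le> 1"
  shows "c / s * (1 - tail) \<le> measure (x_pmf n c s) {x. near_mod1 (\<bar>\<theta> j\<bar> / 2) (\<theta> j) (S x) \<and> x j = 1}"
    and "measure (x_pmf n c s) {x. near_mod1 (\<bar>\<theta> j\<bar> / 2) (\<theta> j) (S x)} \<le> 2 * c / s + tail"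
proof -
  let ?P = "Pi_pmf ({..<n} - {j}) 0 (\<lambda>_. coord_pmf c s)"
  define W where "W f = (\<Sum>k\<in>{..<n} - {j}. \<theta> k * real_of_int (f k))" for f :: "nat \<Rightarrow> int"
  have S_update: "S (f(j := b)) = \<theta> j * real_of_int b + W f" for f b
    using j by (simp add: S_def W_def sum.remove[of "{..<n}" j])
  have P: "x_pmf n c s = map_pmf (\<lambda>(b, f). f(j := b)) (pair_pmf (coord_pmf c s) ?P)"
    using j by (rule x_pmf_split)
  have "measure (coord_pmf c s) {1} = c / s" "measure (coord_pmf c s) {b. b \<noteq> 0} = 2 * c / s"
    using p by (simp_all add: measure_coord_pmf)
  then show "c / s * (1 - tail) \<le> measure (x_pmf n c s) {x. near_mod1 (\<bar>\<theta> j\<bar> / 2) (\<theta> j) (S x) \<and> x j = 1}"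
    and "measure (x_pmf n c s) {x. near_mod1 (\<bar>\<theta> j\<bar> / 2) (\<theta> j) (S x)} \<le> 2 * c / s + tail"
    using measure_update_pmf_near_mod1_ge[OF S_update, of "coord_pmf c s" ?P "\<bar>\<theta> j\<bar> / 2"]
      measure_update_pmf_near_mod1_le[OF S_update assms(4), of "coord_pmf c s" ?P]
    unfolding P tail_def W_def by simp_all
qed

lemma mutual_information_matvec_coordinate_ge:
  fixes A :: "nat \<Rightarrow> nat \<Rightarrow> int" and y :: "nat \<Rightarrow> real"
  assumes c: "0 < c" "c \<le> 1/100" and s: "1 \<le> s" and j: "j < n"
    and nonzero: "Frac (rowcomb r A y j) \<noteq> 0"
    and dominant: "\<bar>Frac (rowcomb r A y j)\<bar>\<^sup>2 \<ge> (1/s) * (\<Sum>k<n. (Frac (rowcomb r A y k))\<^sup>2)"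
  shows "c / 4 / s \<le> prob_space.mutual_information (measure_pmf (x_pmf n c s)) 2
    (count_space UNIV) (count_space UNIV) (\<lambda>x. matvec r n A x) (\<lambda>x. x j)"
proof -
  define \<theta> where "\<theta> k = Frac (rowcomb r A y k)" for k
  define E where "E = {v. near_mod1 (\<bar>\<theta> j\<bar> / 2) (\<theta> j) (\<Sum>i<r. y i * real_of_int (v ! i))}"
  define tail where "tail = measure (Pi_pmf ({..<n} - {j}) 0 (\<lambda>_. coord_pmf c s))
      {f. \<bar>\<theta> j\<bar> / 2 \<le> \<bar>\<Sum>k\<in>{..<n} - {j}. \<theta> k * real_of_int (f k)\<bar>}"
  have p: "0 \<le> 2 * c / s" "2 * c / s \<le> 1" "2 * c / s \<le> 2 * c"
    using c s by (auto simp: field_simps)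
  have E_iff: "matvec r n A x \<in> E \<longleftrightarrow> near_mod1 (\<bar>\<theta> j\<bar> / 2) (\<theta> j) (\<Sum>k<n. \<theta> k * real_of_int (x k))" for x
    by (simp add: E_def \<theta>_def near_mod1_matvec_iff)
  have "\<bar>\<theta> j\<bar> \<le> 1/2"
    unfolding \<theta>_def by (rule abs_Frac_le)
  note estimates = measure_x_pmf_near_mod1[where \<theta> = \<theta>, OF j this p(1,2), folded tail_def E_iff]
  have tail_le: "tail \<le> 8 * c"
    unfolding tail_def using c s j nonzero dominant
    by (intro measure_Pi_coord_pmf_dominated_tail) (auto simp: \<theta>_def)
  have "finite (set_pmf (x_pmf n c s))"
    unfolding x_pmf_def by (intro finite_set_Pi_pmf finite_set_pmf_coord_pmf) simp
  then have "measure (x_pmf n c s) {x. matvec r n A x \<in> E \<and> x j \<in> {1}} / 2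
      - measure (x_pmf n c s) {x. matvec r n A x \<in> E} * measure (x_pmf n c s) {x. x j \<in> {1}}
      \<le> prob_space.mutual_information (measure_pmf (x_pmf n c s)) 2
        (count_space UNIV) (count_space UNIV) (\<lambda>x. matvec r n A x) (\<lambda>x. x j)"
    by (rule mutual_information_pmf_ge)
  moreover have "measure (x_pmf n c s) {x. x j \<in> {1}} = c / s"
    using measure_x_pmf_coordinate[OF j, of c s "{1}"] p by (simp add: measure_coord_pmf)
  moreover have "measure (x_pmf n c s) {x. matvec r n A x \<in> E} * (c / s) \<le> (2 * c / s + tail) * (c / s)"
    using estimates(2) c s by (intro mult_right_mono) auto
  moreover have "1/4 \<le> (1 - tail) / 2 - (2 * c / s + tail)"
    using tail_le c p by (simp add: field_simps)
  then have "c / s * (1/4) \<le> c / s * ((1 - tail) / 2 - (2 * c / s + tail))"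
    using c s by (intro mult_left_mono) auto
  ultimately show ?thesis
    using estimates(1) by (simp add: algebra_simps)
qed

theorem mainTheorem4:
  shows "\<exists>c0>0. \<forall>c. 0 < c \<and> c \<le> c0 \<longrightarrow>
    (\<exists>K>0. \<forall>(r::nat) (n::nat) (A::nat \<Rightarrow> nat \<Rightarrow> int) (s::real) (y::nat \<Rightarrow> real) (j::nat).
       1 \<le> s \<longrightarrow> j < n \<longrightarrow>
       Frac (rowcomb r A y j) \<noteq> 0 \<longrightarrow>
       \<bar>Frac (rowcomb r A y j)\<bar>\<^sup>2 \<ge> (1/s) * (\<Sum>k<n. (Frac (rowcomb r A y k))\<^sup>2) \<longrightarrow>
       prob_space.mutual_information (measure_pmf (x_pmf n c s)) 2
          (count_space UNIV) (count_space UNIV) (\<lambda>x. matvec r n A x) (\<lambda>x. x j)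
         \<ge> K / s)"
  apply (rule exI[of _ "1/100"], intro conjI allI impI)
   apply simp
  subgoal for c
    by (rule exI[of _ "c / 4"], intro conjI allI impI mutual_information_matvec_coordinate_ge) auto
  done

end
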